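(* Let $(W,S)$ be a finitely generated Coxeter system and $u<v$ in $W$. If $u'$ covers $u$ in the interval $[u,v]$, then $u'=(v^{S(u)})_{S(u)\cup\{s\}}\,u$ for some $s\in\mathrm{Des}(v^{S(u)})$, and $C(u')=C(u)\setminus\{s\}$.
   Context: $(W,S)$ is a finitely generated Coxeter system with length function $\ell$. For $w\in W$, $S(w)\subseteq S$ is the set of simple reflections appearing in a (any) reduced expression of $w$, $C(w)=S\setminus S(w)$, and $\mathrm{Des}(w)=\{s\in S:\ell(ws)<\ell(w)\}$. For $I\subseteq S$, $W_I$ is the parabolic subgroup generated by $I$, $X_I=\{u\in W:\ell(us)>\ell(u)\ \forall s\in I\}$, and every $w\in W$ factors uniquely as $w=w^Iw_I$ with $w^I\in X_I$, $w_I\in W_I$ (parabolic components along $I$). The partial order on $W$: $u\le v$ iff $v_{S(u)}=u$. An element $u'$ covers $u$ in $[u,v]$ if $u<u'\le v$ and there is no $w$ with $u<w<u'$. *)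

theory Defs
  imports "HOL-Algebra.Algebra"
begin

definition wprod :: "('a, 'b) monoid_scheme \<Rightarrow> 'a list \<Rightarrow> 'a" where
  "wprod G ws = foldr (\<lambda>x y. x \<otimes>\<^bsub>G\<^esub> y) ws \<one>\<^bsub>G\<^esub>"

text \<open>Coxeter exponent m(s,t): the order of st (0 encodes infinity).\<close>
definition cox_m :: "('a, 'b) monoid_scheme \<Rightarrow> 'a \<Rightarrow> 'a \<Rightarrow> nat" where
  "cox_m G s t = (if \<exists>n::nat>0. (s \<otimes>\<^bsub>G\<^esub> t) [^]\<^bsub>G\<^esub> n = \<one>\<^bsub>G\<^esub>
                  then (LEAST n::nat. n > 0 \<and> (s \<otimes>\<^bsub>G\<^esub> t) [^]\<^bsub>G\<^esub> n = \<one>\<^bsub>G\<^esub>) else 0)"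

text \<open>Coxeter relators (st)^{m(s,t)} for s,t in S with m(s,t) finite
  (including s = t, which gives ss).\<close>
definition cox_relators :: "('a, 'b) monoid_scheme \<Rightarrow> 'a set \<Rightarrow> 'a list set" where
  "cox_relators G S = {concat (replicate (cox_m G s t) [s, t]) | s t.
       s \<in> S \<and> t \<in> S \<and> cox_m G s t > 0}"

inductive cox_equiv :: "('a, 'b) monoid_scheme \<Rightarrow> 'a set \<Rightarrow> 'a list \<Rightarrow> 'a list \<Rightarrow> bool"
  for G S where
  refl: "cox_equiv G S xs xs"
| sym: "cox_equiv G S xs ys \<Longrightarrow> cox_equiv G S ys xs"
| trans: "cox_equiv G S xs ys \<Longrightarrow> cox_equiv G S ys zs \<Longrightarrow> cox_equiv G S xs zs"
| rel: "r \<in> cox_relators G S \<Longrightarrow> cox_equiv G S (xs @ r @ ys) (xs @ ys)"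

text \<open>(G,S) is a finitely generated Coxeter system: S is a finite set of involutions
  generating G, and every relation among the generators is a consequence of the
  Coxeter relations (st)^{m(s,t)} = 1, i.e. G has the Coxeter presentation on S.\<close>
definition coxeter_system :: "('a, 'b) monoid_scheme \<Rightarrow> 'a set \<Rightarrow> bool" where
  "coxeter_system G S \<longleftrightarrow>
     group G \<and> S \<subseteq> carrier G \<and> finite S \<and> \<one>\<^bsub>G\<^esub> \<notin> S \<and>
     (\<forall>s\<in>S. s \<otimes>\<^bsub>G\<^esub> s = \<one>\<^bsub>G\<^esub>) \<and>
     generate G S = carrier G \<and>
     (\<forall>ws \<in> lists S. wprod G ws = \<one>\<^bsub>G\<^esub> \<longrightarrow> cox_equiv G S ws [])"

definition cox_len :: "('a, 'b) monoid_scheme \<Rightarrow> 'a set \<Rightarrow> 'a \<Rightarrow> nat" where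
  "cox_len G S w = (LEAST n. \<exists>ws \<in> lists S. length ws = n \<and> wprod G ws = w)"

definition reduced_expr :: "('a, 'b) monoid_scheme \<Rightarrow> 'a set \<Rightarrow> 'a list \<Rightarrow> 'a \<Rightarrow> bool" where
  "reduced_expr G S ws w \<longleftrightarrow> ws \<in> lists S \<and> wprod G ws = w \<and> length ws = cox_len G S w"

definition supp :: "('a, 'b) monoid_scheme \<Rightarrow> 'a set \<Rightarrow> 'a \<Rightarrow> 'a set" where
  "supp G S w = {s. \<exists>ws. reduced_expr G S ws w \<and> s \<in> set ws}"

definition cosupp :: "('a, 'b) monoid_scheme \<Rightarrow> 'a set \<Rightarrow> 'a \<Rightarrow> 'a set" where
  "cosupp G S w = S - supp G S w"

definition descents :: "('a, 'b) monoid_scheme \<Rightarrow> 'a set \<Rightarrow> 'a \<Rightarrow> 'a set" where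
  "descents G S w = {s \<in> S. cox_len G S (w \<otimes>\<^bsub>G\<^esub> s) < cox_len G S w}"

definition parabolic :: "('a, 'b) monoid_scheme \<Rightarrow> 'a set \<Rightarrow> 'a set" where
  "parabolic G I = generate G I"

definition min_reps :: "('a, 'b) monoid_scheme \<Rightarrow> 'a set \<Rightarrow> 'a set \<Rightarrow> 'a set" where
  "min_reps G S I = {u \<in> carrier G. \<forall>s\<in>I. cox_len G S (u \<otimes>\<^bsub>G\<^esub> s) > cox_len G S u}"

text \<open>Parabolic components: w = w^I w_I with w^I in X_I and w_I in W_I.\<close>
definition par_quot :: "('a, 'b) monoid_scheme \<Rightarrow> 'a set \<Rightarrow> 'a set \<Rightarrow> 'a \<Rightarrow> 'a" where
  "par_quot G S I w = (THE u. u \<in> min_reps G S I \<and>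
      (\<exists>x \<in> parabolic G I. w = u \<otimes>\<^bsub>G\<^esub> x))"

definition par_comp :: "('a, 'b) monoid_scheme \<Rightarrow> 'a set \<Rightarrow> 'a set \<Rightarrow> 'a \<Rightarrow> 'a" where
  "par_comp G S I w = (THE x. x \<in> parabolic G I \<and>
      (\<exists>u \<in> min_reps G S I. w = u \<otimes>\<^bsub>G\<^esub> x))"

definition cox_le :: "('a, 'b) monoid_scheme \<Rightarrow> 'a set \<Rightarrow> 'a \<Rightarrow> 'a \<Rightarrow> bool" where
  "cox_le G S u v \<longleftrightarrow> u \<in> carrier G \<and> v \<in> carrier G \<and> par_comp G S (supp G S u) v = u"

definition cox_less :: "('a, 'b) monoid_scheme \<Rightarrow> 'a set \<Rightarrow> 'a \<Rightarrow> 'a \<Rightarrow> bool" where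
  "cox_less G S u v \<longleftrightarrow> cox_le G S u v \<and> u \<noteq> v"

definition covers_in :: "('a, 'b) monoid_scheme \<Rightarrow> 'a set \<Rightarrow> 'a \<Rightarrow> 'a \<Rightarrow> 'a \<Rightarrow> bool" where
  "covers_in G S u v u' \<longleftrightarrow> cox_less G S u u' \<and> cox_le G S u' v \<and>
     \<not> (\<exists>w \<in> carrier G. cox_less G S u w \<and> cox_less G S w u')"

end

theory Submission
  imports Defs
begin

text \<open>
  Inserting a Coxeter relator \<open>(s t)\<^sup>m\<close> into a word changes its length by an even amount
  and inserts a doubled block into its sequence of reflections \<open>s\<^sub>1 \<cdots> s\<^sub>i \<cdots> s\<^sub>1\<close>.
  Since any two words for the same element are related by such moves, the parity of the length
  and of the number of occurrences of each reflection depends only on the element; this yields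
  the exchange condition and from it the standard facts: \<open>S(w)\<close> is the set of letters of any
  reduced word of \<open>w\<close>, lengths add in \<open>u x\<close> for \<open>u \<in> X\<^sub>I\<close> and \<open>x \<in> W\<^sub>I\<close>, and parabolic
  factorizations are unique.

  Now \<open>u \<le> u'\<close> means \<open>u' = y u\<close> with \<open>y \<in> X\<^bsub>S(u)\<^esub>\<close>, and \<open>u' \<le> v\<close> means \<open>v = x u'\<close> with
  \<open>x \<in> X\<^bsub>S(u')\<^esub>\<close>, so that \<open>v\<^bsup>S(u)\<^esup> = x y\<close>. Pick a right descent \<open>s\<close> of \<open>y \<noteq> 1\<close> and put
  \<open>K = S(u) \<union> {s}\<close>. Then \<open>w = y\<^sub>K u\<close> satisfies \<open>u < w \<le> u'\<close> and \<open>S(w) = K\<close>, so \<open>w = u'\<close>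
  because \<open>u'\<close> covers \<open>u\<close>; finally \<open>(x y)\<^sub>K = y\<^sub>K\<close> and \<open>s\<close> is a descent of \<open>x y\<close>.
\<close>

section \<open>Words and their reflection sequences\<close>

lemma wprod_Nil [simp]: "wprod G [] = \<one>\<^bsub>G\<^esub>"
  by (simp add: wprod_def)

lemma wprod_Cons [simp]: "wprod G (a # ws) = a \<otimes>\<^bsub>G\<^esub> wprod G ws"
  by (simp add: wprod_def)

text \<open>The i-th entry of \<open>word_reflections G [s\<^sub>1, \<dots>, s\<^sub>n]\<close> is the reflection
  \<open>s\<^sub>1 \<cdots> s\<^sub>i \<cdots> s\<^sub>1\<close>; multiplying the product of the word by it on the left
  deletes the i-th letter.\<close>
fun word_reflections :: "('a, 'b) monoid_scheme \<Rightarrow> 'a list \<Rightarrow> 'a list" where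
  "word_reflections G [] = []"
| "word_reflections G (a # ws) = a # map (\<lambda>t. a \<otimes>\<^bsub>G\<^esub> t \<otimes>\<^bsub>G\<^esub> a) (word_reflections G ws)"

lemma length_word_reflections [simp]: "length (word_reflections G ws) = length ws"
  by (induction ws) auto

declare in_lists_conv_set [simp]

lemma set_delete_nth_subset: "set (take i ws @ drop (Suc i) ws) \<subseteq> set ws"
  by (auto dest: in_set_takeD in_set_dropD)

lemma count_list_map_inj_on:
  "inj_on f (insert y (set xs)) \<Longrightarrow> count_list (map f xs) (f y) = count_list xs y"
  by (induction xs) (auto simp: inj_on_def)

locale coxeter_group =
  fixes G (structure) and S
  assumes coxeter_system: "coxeter_system G S"
begin

sublocale group G
  using coxeter_system by (simp add: coxeter_system_def)

lemma generator_closed [simp]: "s \<in> S \<Longrightarrow> s \<in> carrier G"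
  using coxeter_system by (auto simp: coxeter_system_def)

lemma one_not_generator: "\<one> \<notin> S"
  using coxeter_system by (simp add: coxeter_system_def)

lemma generator_square [simp]: "s \<in> S \<Longrightarrow> s \<otimes> s = \<one>"
  using coxeter_system by (simp add: coxeter_system_def)

lemma generator_inv [simp]: "s \<in> S \<Longrightarrow> inv s = s"
  by (simp add: inv_equality)

lemma generator_cancel_left [simp]: "s \<in> S \<Longrightarrow> w \<in> carrier G \<Longrightarrow> s \<otimes> (s \<otimes> w) = w"
  by (simp add: m_assoc[symmetric])

lemma generator_cancel_right [simp]: "s \<in> S \<Longrightarrow> w \<in> carrier G \<Longrightarrow> w \<otimes> s \<otimes> s = w"
  by (simp add: m_assoc)

lemma generate_generators: "generate G S = carrier G"
  using coxeter_system by (simp add: coxeter_system_def)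

lemma cox_equiv_Nil_if_wprod_one: "ws \<in> lists S \<Longrightarrow> wprod G ws = \<one> \<Longrightarrow> cox_equiv G S ws []"
  using coxeter_system by (simp add: coxeter_system_def)

lemma wprod_closed [simp]: "ws \<in> lists S \<Longrightarrow> wprod G ws \<in> carrier G"
  by (induction ws) auto

lemma wprod_append: "xs \<in> lists S \<Longrightarrow> ys \<in> lists S \<Longrightarrow> wprod G (xs @ ys) = wprod G xs \<otimes> wprod G ys"
  by (induction xs) (auto simp: m_assoc)

lemma wprod_snoc: "xs \<in> lists S \<Longrightarrow> s \<in> S \<Longrightarrow> wprod G (xs @ [s]) = wprod G xs \<otimes> s"
  by (simp add: wprod_append)

lemma wprod_rev: "ws \<in> lists S \<Longrightarrow> wprod G (rev ws) = inv (wprod G ws)"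
proof (induction ws)
  case (Cons a ws)
  then show ?case
    by (simp add: wprod_snoc inv_mult_group)
qed simp

lemma word_reflections_closed: "ws \<in> lists S \<Longrightarrow> set (word_reflections G ws) \<subseteq> carrier G"
  by (induction ws) auto

lemma word_reflections_append:
  "xs \<in> lists S \<Longrightarrow> ys \<in> lists S \<Longrightarrow> word_reflections G (xs @ ys) =
     word_reflections G xs @ map (\<lambda>t. wprod G xs \<otimes> t \<otimes> inv (wprod G xs)) (word_reflections G ys)"
proof (induction xs)
  case Nil
  then show ?case
    using word_reflections_closed[of ys] by (auto intro!: map_idI[symmetric])
next
  case (Cons a xs)
  have "a \<otimes> (wprod G xs \<otimes> t \<otimes> inv (wprod G xs)) \<otimes> a
      = a \<otimes> wprod G xs \<otimes> t \<otimes> inv (a \<otimes> wprod G xs)"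
    if "t \<in> set (word_reflections G ys)" for t
    using that word_reflections_closed[of ys] Cons.prems by (auto simp: m_assoc inv_mult_group)
  then show ?case
    using Cons by simp
qed

lemma word_reflections_mult_wprod:
  "ws \<in> lists S \<Longrightarrow> i < length ws \<Longrightarrow>
   word_reflections G ws ! i \<otimes> wprod G ws = wprod G (take i ws @ drop (Suc i) ws)"
proof (induction ws arbitrary: i)
  case (Cons a ws)
  show ?case
  proof (cases i)
    case (Suc j)
    have "word_reflections G ws ! j \<in> carrier G"
      using word_reflections_closed[of ws] Cons.prems Suc by (auto dest: nth_mem)
    then show ?thesis
      using Cons Suc by (simp add: m_assoc)
  qed (use Cons.prems in \<open>simp add: m_assoc[symmetric]\<close>)
qed simp

lemma relatorE:
  assumes "r \<in> cox_relators G S"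
  obtains s t m where "s \<in> S" "t \<in> S" "r = concat (replicate m [s, t])" "(s \<otimes> t) [^] m = \<one>"
proof -
  obtain s t where st: "s \<in> S" "t \<in> S" "cox_m G s t > 0"
    and r: "r = concat (replicate (cox_m G s t) [s, t])"
    using assms unfolding cox_relators_def by auto
  then have ex: "\<exists>n::nat>0. (s \<otimes> t) [^] n = \<one>"
    unfolding cox_m_def by (auto split: if_splits)
  then have "(s \<otimes> t) [^] cox_m G s t = \<one>"
    unfolding cox_m_def using LeastI_ex[OF ex] by simp
  with st r show thesis
    using that by blast
qed

lemma generator_square_relator: "s \<in> S \<Longrightarrow> [s, s] \<in> cox_relators G S"
proof -
  assume s: "s \<in> S"
  have "(LEAST n::nat. n > 0 \<and> (s \<otimes> s) [^] n = \<one>) = 1"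
    using s by (intro Least_equality) auto
  then have "cox_m G s s = 1"
    using s unfolding cox_m_def by auto
  then show ?thesis
    using s unfolding cox_relators_def by (auto intro!: exI[of _ s])
qed

lemma wprod_alternating: "s \<in> S \<Longrightarrow> t \<in> S \<Longrightarrow> wprod G (concat (replicate m [s, t])) = (s \<otimes> t) [^] m"
proof (induction m)
  case (Suc m)
  then show ?case
    using nat_pow_Suc2[of "s \<otimes> t" m] by (simp add: m_assoc)
qed simp

lemma word_reflections_alternating:
  assumes "s \<in> S" and "t \<in> S"
  shows "word_reflections G (concat (replicate m [s, t])) = map (\<lambda>i. (s \<otimes> t) [^] i \<otimes> s) [0..<2*m]"
proof (induction m)
  case (Suc m)
  have "s \<otimes> (t \<otimes> ((s \<otimes> t) [^] i \<otimes> s) \<otimes> t) \<otimes> s = (s \<otimes> t) [^] Suc (Suc i) \<otimes> s" for i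
    using assms nat_pow_Suc2[of "s \<otimes> t" i] by (simp add: m_assoc)
  moreover have "2 * Suc m = Suc (Suc (2 * m))"
    by simp
  ultimately show ?case
    using Suc assms by (simp only: map_upt_Suc) (simp add: m_assoc)
qed simp

lemma word_reflections_relator:
  assumes "r \<in> cox_relators G S"
  obtains L where "word_reflections G r = L @ L" and "even (length r)"
proof -
  obtain s t m where st: "s \<in> S" "t \<in> S" and r: "r = concat (replicate m [s, t])"
    and order: "(s \<otimes> t) [^] m = \<one>"
    using assms by (rule relatorE)
  define f where "f i = (s \<otimes> t) [^] i \<otimes> s" for i :: nat
  have "f (i + m) = f i" for i
    unfolding f_def using st order by (simp add: nat_pow_mult[symmetric])
  then have "map f [m..<m+m] = map f [0..<m]"
    unfolding map_add_upt[symmetric] by simp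
  moreover have "[0..<2*m] = [0..<m] @ [m..<m+m]"
    by (simp add: upt_add_eq_append[of 0 m m, simplified] mult_2)
  ultimately have "word_reflections G r = map f [0..<m] @ map f [0..<m]"
    using word_reflections_alternating[OF st] unfolding r f_def by simp
  moreover have "length r = 2 * m"
    unfolding r by (induction m) auto
  ultimately show thesis
    using that by simp
qed

lemma relator_in_lists: "r \<in> cox_relators G S \<Longrightarrow> r \<in> lists S"
  by (erule relatorE) auto

lemma wprod_relator: "r \<in> cox_relators G S \<Longrightarrow> wprod G r = \<one>"
  by (erule relatorE) (simp add: wprod_alternating)

text \<open>Letters outside \<open>S\<close> are filtered out because \<open>cox_equiv\<close> also relates arbitrary words.\<close>
lemma cox_equiv_parity:
  "cox_equiv G S xs ys \<Longrightarrow>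
   even (length [x\<leftarrow>xs. x \<in> S] + length [y\<leftarrow>ys. y \<in> S]) \<and>
   (\<forall>t. even (count_list (word_reflections G [x\<leftarrow>xs. x \<in> S]) t
             + count_list (word_reflections G [y\<leftarrow>ys. y \<in> S]) t))"
proof (induction rule: cox_equiv.induct)
  case (sym xs ys)
  then show ?case
    by (simp add: add.commute)
next
  case (trans xs ys zs)
  have "even (a + c)" if "even (a + b)" and "even (b + c)" for a b c :: nat
    using that by presburger
  then show ?case
    using trans.IH by blast
next
  case (rel r xs ys)
  obtain L where L: "word_reflections G r = L @ L" "even (length r)"
    using rel by (rule word_reflections_relator)
  have r: "r \<in> lists S" "wprod G r = \<one>"
    using relator_in_lists[OF rel] wprod_relator[OF rel] by auto
  define A where "A = [x\<leftarrow>xs. x \<in> S]"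
  define B where "B = [y\<leftarrow>ys. y \<in> S]"
  define c where "c t = wprod G A \<otimes> t \<otimes> inv (wprod G A)" for t
  have AB: "A \<in> lists S" "B \<in> lists S"
    unfolding A_def B_def by auto
  have "word_reflections G (r @ B) = L @ L @ word_reflections G B"
    using word_reflections_append[of r B] word_reflections_closed[of B] r AB L
    by (auto intro!: map_idI)
  then have "word_reflections G (A @ r @ B) =
      word_reflections G A @ map c (L @ L) @ map c (word_reflections G B)"
    using word_reflections_append[of A "r @ B"] AB r unfolding c_def by auto
  moreover have "word_reflections G (A @ B) = word_reflections G A @ map c (word_reflections G B)"
    using word_reflections_append[of A B] AB unfolding c_def by simp
  ultimately have "count_list (word_reflections G (A @ r @ B)) t =
      count_list (word_reflections G (A @ B)) t + 2 * count_list (map c L) t" for t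
    by simp
  moreover have "[x\<leftarrow>xs @ r @ ys. x \<in> S] = A @ r @ B" and "[x\<leftarrow>xs @ ys. x \<in> S] = A @ B"
    using r unfolding A_def B_def by simp_all
  ultimately show ?case
    using L(2) by simp
qed simp

lemma cox_equiv_append_cong:
  "cox_equiv G S xs ys \<Longrightarrow> cox_equiv G S (as @ xs @ bs) (as @ ys @ bs)"
proof (induction rule: cox_equiv.induct)
  case (rel r xs ys)
  then show ?case
    using cox_equiv.rel[of r G S "as @ xs" "ys @ bs"] by simp
next
  case (refl xs)
  show ?case
    by (rule cox_equiv.refl)
next
  case (sym xs ys)
  show ?case
    using sym.IH by (rule cox_equiv.sym)
next
  case (trans xs ys zs)
  show ?case
    using trans.IH by (rule cox_equiv.trans)
qed

lemma cox_equiv_rev_append: "ws \<in> lists S \<Longrightarrow> cox_equiv G S (rev ws @ ws) []"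
proof (induction ws)
  case (Cons a ws)
  then have "cox_equiv G S (rev ws @ [a, a] @ ws) (rev ws @ ws)"
    using cox_equiv.rel[OF generator_square_relator] by simp
  moreover have "cox_equiv G S (rev ws @ ws) []"
    using Cons by simp
  ultimately have "cox_equiv G S (rev ws @ [a, a] @ ws) []"
    by (rule cox_equiv.trans)
  then show ?case
    by simp
qed (simp add: cox_equiv.refl)

lemma cox_equiv_if_wprod_eq:
  assumes "ws \<in> lists S" and "ws' \<in> lists S" and "wprod G ws = wprod G ws'"
  shows "cox_equiv G S ws ws'"
proof -
  have "wprod G (ws @ rev ws') = \<one>"
    using assms by (simp add: wprod_append wprod_rev)
  then have "cox_equiv G S (ws @ rev ws') []"
    using assms by (intro cox_equiv_Nil_if_wprod_one) auto
  from cox_equiv_append_cong[OF this, of "[]" ws']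
  have to_ws': "cox_equiv G S (ws @ rev ws' @ ws') ws'"
    by simp
  from cox_equiv_append_cong[OF cox_equiv_rev_append[OF assms(2)], of ws "[]"]
  have "cox_equiv G S (ws @ rev ws' @ ws') ws"
    by simp
  from cox_equiv.trans[OF cox_equiv.sym[OF this] to_ws'] show ?thesis .
qed

lemma wprod_eq_parity:
  assumes "ws \<in> lists S" and "ws' \<in> lists S" and "wprod G ws = wprod G ws'"
  shows "even (length ws + length ws')"
    and "even (count_list (word_reflections G ws) t + count_list (word_reflections G ws') t)"
proof -
  have "[x\<leftarrow>ws. x \<in> S] = ws" and "[x\<leftarrow>ws'. x \<in> S] = ws'"
    using assms(1,2) by simp_all
  with cox_equiv_parity[OF cox_equiv_if_wprod_eq[OF assms]]
  show "even (length ws + length ws')"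
    and "even (count_list (word_reflections G ws) t + count_list (word_reflections G ws') t)"
    by simp_all
qed

section \<open>Length and the exchange condition\<close>

abbreviation len :: "'a \<Rightarrow> nat" where
  "len \<equiv> cox_len G S"

lemma wprod_in_parabolic: "ws \<in> lists I \<Longrightarrow> wprod G ws \<in> parabolic G I"
  unfolding parabolic_def by (induction ws) (auto intro: generate.intros)

lemma parabolic_wordE:
  assumes "I \<subseteq> S" and "x \<in> parabolic G I"
  obtains ws where "ws \<in> lists I" and "wprod G ws = x"
proof -
  have "\<exists>ws \<in> lists I. wprod G ws = x"
    using assms(2) unfolding parabolic_def
  proof (induction rule: generate.induct)
    case one
    show ?case
      by (auto intro!: bexI[of _ "[]"])
  next
    case (incl h)
    then show ?case
      using assms(1) by (auto intro!: bexI[of _ "[h]"])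
  next
    case (inv h)
    then show ?case
      using assms(1) by (auto intro!: bexI[of _ "[h]"])
  next
    case (eng h1 h2)
    then obtain xs ys where "xs \<in> lists I" "ys \<in> lists I" "wprod G xs = h1" "wprod G ys = h2"
      by blast
    moreover have "wprod G (xs @ ys) = h1 \<otimes> h2"
      using calculation assms(1) wprod_append[of xs ys] by auto
    ultimately show ?case
      by (auto intro!: bexI[of _ "xs @ ys"])
  qed
  then show thesis
    using that by blast
qed

lemma reduced_exprD: "reduced_expr G S ws w \<Longrightarrow> ws \<in> lists S \<and> wprod G ws = w \<and> length ws = len w"
  by (simp add: reduced_expr_def)

lemma reduced_expr_closed: "reduced_expr G S ws w \<Longrightarrow> w \<in> carrier G"
  using reduced_exprD wprod_closed by blast

lemma cox_len_le_length: "ws \<in> lists S \<Longrightarrow> len (wprod G ws) \<le> length ws"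
  unfolding cox_len_def by (rule Least_le) auto

lemma reduced_expr_exists: "w \<in> carrier G \<Longrightarrow> \<exists>ws. reduced_expr G S ws w"
proof -
  assume "w \<in> carrier G"
  then obtain ws where "ws \<in> lists S" "wprod G ws = w"
    using parabolic_wordE[of S w] generate_generators by (auto simp: parabolic_def)
  then have "\<exists>n. \<exists>ws \<in> lists S. length ws = n \<and> wprod G ws = w"
    by (intro exI bexI[of _ ws]) simp_all
  from LeastI_ex[OF this] show ?thesis
    unfolding reduced_expr_def cox_len_def by auto
qed

lemma cox_len_one [simp]: "len \<one> = 0"
  using cox_len_le_length[of "[]"] by simp

lemma cox_len_eq_0: "w \<in> carrier G \<Longrightarrow> len w = 0 \<Longrightarrow> w = \<one>"
  using reduced_expr_exists[of w] by (auto simp: reduced_expr_def)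

lemma cox_len_generator: "s \<in> S \<Longrightarrow> len s = 1"
  using cox_len_le_length[of "[s]"] cox_len_eq_0[of s] one_not_generator by fastforce

lemma cox_len_inv_le: "w \<in> carrier G \<Longrightarrow> len (inv w) \<le> len w"
proof -
  assume "w \<in> carrier G"
  then obtain ws where "ws \<in> lists S" "wprod G ws = w" "length ws = len w"
    using reduced_expr_exists by (auto simp: reduced_expr_def)
  then show ?thesis
    using cox_len_le_length[of "rev ws"] wprod_rev[of ws] by simp
qed

lemma cox_len_inv: "w \<in> carrier G \<Longrightarrow> len (inv w) = len w"
  using cox_len_inv_le[of w] cox_len_inv_le[of "inv w"] by simp

lemma reduced_expr_rev: "reduced_expr G S ws w \<Longrightarrow> reduced_expr G S (rev ws) (inv w)"
  using cox_len_inv[of w] wprod_rev[of ws] unfolding reduced_expr_def by auto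

lemma cox_len_mult_generator_le: "w \<in> carrier G \<Longrightarrow> s \<in> S \<Longrightarrow> len (w \<otimes> s) \<le> len w + 1"
proof -
  assume "w \<in> carrier G" and s: "s \<in> S"
  then obtain ws where "ws \<in> lists S" "wprod G ws = w" "length ws = len w"
    using reduced_expr_exists by (auto simp: reduced_expr_def)
  then show ?thesis
    using cox_len_le_length[of "ws @ [s]"] s by (simp add: wprod_snoc)
qed

lemma cox_len_mult_generator_neq:
  assumes w: "w \<in> carrier G" and s: "s \<in> S"
  shows "len (w \<otimes> s) \<noteq> len w"
proof -
  obtain ws where ws: "ws \<in> lists S" "wprod G ws = w" "length ws = len w"
    using w reduced_expr_exists by (auto simp: reduced_expr_def)
  obtain ws' where ws': "ws' \<in> lists S" "wprod G ws' = w \<otimes> s" "length ws' = len (w \<otimes> s)"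
    using reduced_expr_exists[of "w \<otimes> s"] w s by (auto simp: reduced_expr_def)
  have "wprod G (ws @ [s]) = wprod G ws'"
    using ws ws' s by (simp add: wprod_snoc)
  then have "even (length (ws @ [s]) + length ws')"
    using ws(1) ws'(1) s by (intro wprod_eq_parity(1)) auto
  then have "even (Suc (len w + len (w \<otimes> s)))"
    using ws(3) ws'(3) by simp
  then show ?thesis
    by (auto simp: even_add)
qed

lemma cox_len_mult_generator:
  assumes "w \<in> carrier G" and "s \<in> S"
  shows "len (w \<otimes> s) = len w + 1 \<or> len (w \<otimes> s) + 1 = len w"
proof -
  have "len w \<le> len (w \<otimes> s) + 1"
    using cox_len_mult_generator_le[of "w \<otimes> s" s] assms by simp
  then show ?thesis
    using cox_len_mult_generator_le[OF assms] cox_len_mult_generator_neq[OF assms] by linarith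
qed

text \<open>Both \<open>ws\<close> and \<open>s # ws'\<close>, with \<open>ws'\<close> a reduced word of \<open>s \<otimes> w\<close>, spell \<open>w\<close>, so
  \<open>s\<close> occurs with the same parity in their reflection sequences. If it occurs in that of \<open>ws\<close>,
  multiplying by it deletes a letter of \<open>ws\<close>; otherwise it occurs in that of \<open>ws'\<close>, and
  deleting that letter would make \<open>w\<close> shorter than \<open>s \<otimes> w\<close>.\<close>
lemma exchange_left:
  assumes r: "reduced_expr G S ws w" and s: "s \<in> S" and shorter: "len (s \<otimes> w) < len w"
  obtains i where "i < length ws" and "s \<otimes> w = wprod G (take i ws @ drop (Suc i) ws)"
proof -
  have ws: "ws \<in> lists S" "wprod G ws = w" and w: "w \<in> carrier G"
    using reduced_exprD[OF r] reduced_expr_closed[OF r] by auto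
  obtain ws' where ws': "ws' \<in> lists S" "wprod G ws' = s \<otimes> w" "length ws' = len (s \<otimes> w)"
    using reduced_expr_exists[of "s \<otimes> w"] w s by (auto simp: reduced_expr_def)
  have "wprod G ws = wprod G (s # ws')"
    using ws ws' s w by simp
  then have parity: "even (count_list (word_reflections G ws) s + count_list (word_reflections G (s # ws')) s)"
    using ws(1) ws'(1) s by (intro wprod_eq_parity(2)) auto
  have "inj_on (\<lambda>t. s \<otimes> t \<otimes> s) (carrier G)"
    using s by (auto intro!: inj_onI simp: m_assoc)
  then have "count_list (map (\<lambda>t. s \<otimes> t \<otimes> s) (word_reflections G ws')) (s \<otimes> s \<otimes> s)
      = count_list (word_reflections G ws') s"
    by (rule count_list_map_inj_on[OF inj_on_subset])
      (use word_reflections_closed[OF ws'(1)] s in auto)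
  then have "count_list (word_reflections G (s # ws')) s = Suc (count_list (word_reflections G ws') s)"
    using s by simp
  show thesis
  proof (cases "s \<in> set (word_reflections G ws)")
    case True
    then obtain i where "i < length ws" "word_reflections G ws ! i = s"
      by (auto simp: in_set_conv_nth)
    then show thesis
      using that word_reflections_mult_wprod[OF ws(1)] ws(2) by auto
  next
    case False
    then have "odd (count_list (word_reflections G ws') s)"
      using parity \<open>count_list (word_reflections G (s # ws')) s = _\<close> by simp
    then have "s \<in> set (word_reflections G ws')"
      by (metis count_notin even_zero)
    then obtain i where i: "i < length ws'" "word_reflections G ws' ! i = s"
      by (auto simp: in_set_conv_nth)
    have "s \<otimes> (s \<otimes> w) = wprod G (take i ws' @ drop (Suc i) ws')"
      using word_reflections_mult_wprod[OF ws'(1) i(1)] unfolding i(2) ws'(2) .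
    then have "w = wprod G (take i ws' @ drop (Suc i) ws')"
      using s w by simp
    moreover have "take i ws' @ drop (Suc i) ws' \<in> lists S"
      using ws'(1) set_delete_nth_subset[of i ws'] by auto
    ultimately have "len w < length ws'"
      using cox_len_le_length[of "take i ws' @ drop (Suc i) ws'"] i(1) by simp
    then show thesis
      using shorter ws'(3) by linarith
  qed
qed

lemma exchange_right:
  assumes r: "reduced_expr G S ws w" and s: "s \<in> S" and shorter: "len (w \<otimes> s) < len w"
  obtains i where "i < length ws" and "w \<otimes> s = wprod G (take i ws @ drop (Suc i) ws)"
proof -
  have ws: "ws \<in> lists S" "wprod G ws = w" and w: "w \<in> carrier G"
    using r by (auto simp: reduced_expr_def)
  have "len (s \<otimes> inv w) < len (inv w)"
    using shorter w s cox_len_inv[of w] cox_len_inv[of "w \<otimes> s"] by (simp add: inv_mult_group)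
  with reduced_expr_rev[OF r] s obtain i where i: "i < length ws"
    and del: "s \<otimes> inv w = wprod G (take i (rev ws) @ drop (Suc i) (rev ws))"
    by (auto elim: exchange_left)
  define j where "j = length ws - Suc i"
  have "rev (take i (rev ws) @ drop (Suc i) (rev ws)) = take j ws @ drop (Suc j) ws"
    using i by (simp add: take_rev drop_rev j_def Suc_diff_Suc)
  moreover have "take i (rev ws) @ drop (Suc i) (rev ws) \<in> lists S"
    using ws(1) set_delete_nth_subset[of i "rev ws"] by auto
  moreover have "w \<otimes> s = inv (s \<otimes> inv w)"
    using w s by (simp add: inv_mult_group)
  ultimately have "w \<otimes> s = wprod G (take j ws @ drop (Suc j) ws)"
    using del wprod_rev by metis
  moreover have "j < length ws"
    using i by (simp add: j_def)
  ultimately show thesis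
    using that by blast
qed

lemma reduced_subword_exists:
  "ws \<in> lists S \<Longrightarrow> \<exists>ys. reduced_expr G S ys (wprod G ws) \<and> set ys \<subseteq> set ws"
proof (induction ws rule: rev_induct)
  case Nil
  then show ?case
    by (auto simp: reduced_expr_def)
next
  case (snoc a xs)
  then obtain ys where ys: "reduced_expr G S ys (wprod G xs)" "set ys \<subseteq> set xs"
    by auto
  have a: "a \<in> S" and xs: "xs \<in> lists S"
    using snoc.prems by auto
  define w where "w = wprod G xs"
  have w: "w \<in> carrier G" and Y: "ys \<in> lists S" "wprod G ys = w" "length ys = len w"
    using ys xs by (auto simp: reduced_expr_def w_def)
  have e: "wprod G (xs @ [a]) = w \<otimes> a"
    unfolding w_def using xs a by (simp add: wprod_snoc)
  consider "len (w \<otimes> a) = len w + 1" | "len (w \<otimes> a) < len w"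
    using cox_len_mult_generator[OF w a] by linarith
  then show ?case
  proof cases
    case 1
    then have "reduced_expr G S (ys @ [a]) (w \<otimes> a)"
      using Y a by (simp add: reduced_expr_def wprod_snoc)
    then show ?thesis
      unfolding e using ys(2) by (intro exI[of _ "ys @ [a]"]) auto
  next
    case 2
    with ys(1) a obtain i where i: "i < length ys" "w \<otimes> a = wprod G (take i ys @ drop (Suc i) ys)"
      unfolding w_def[symmetric] by (rule exchange_right)
    have "len (w \<otimes> a) + 1 = len w"
      using cox_len_mult_generator[OF w a] 2 by linarith
    then have "reduced_expr G S (take i ys @ drop (Suc i) ys) (w \<otimes> a)"
      using i Y set_delete_nth_subset[of i ys] by (auto simp: reduced_expr_def)
    moreover have "set (take i ys @ drop (Suc i) ys) \<subseteq> set (xs @ [a])"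
      using set_delete_nth_subset[of i ys] ys(2) by auto
    ultimately show ?thesis
      unfolding e by blast
  qed
qed

section \<open>Parabolic subgroups and supports\<close>

lemma parabolic_subgroup: "I \<subseteq> S \<Longrightarrow> subgroup (parabolic G I) G"
  unfolding parabolic_def by (intro generate_is_subgroup) auto

lemmas parabolic_closed = subgroup.mem_carrier[OF parabolic_subgroup]
lemmas parabolic_mult = subgroup.m_closed[OF parabolic_subgroup]
lemmas parabolic_inv = subgroup.m_inv_closed[OF parabolic_subgroup]
lemmas parabolic_one = subgroup.one_closed[OF parabolic_subgroup]

lemma generator_in_parabolic: "s \<in> I \<Longrightarrow> s \<in> parabolic G I"
  unfolding parabolic_def by (rule generate.incl)

lemma parabolic_mono: "I \<subseteq> J \<Longrightarrow> parabolic G I \<subseteq> parabolic G J"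
  unfolding parabolic_def by (rule mono_generate)

lemma parabolic_reduced_expr:
  assumes "I \<subseteq> S" and "w \<in> parabolic G I"
  obtains ws where "reduced_expr G S ws w" and "set ws \<subseteq> I"
proof -
  obtain xs where xs: "xs \<in> lists I" "wprod G xs = w"
    using assms by (rule parabolic_wordE)
  then have "xs \<in> lists S"
    using assms(1) by auto
  with xs show thesis
    using that reduced_subword_exists[of xs] by fastforce
qed

lemma generator_in_parabolicD:
  assumes "I \<subseteq> S" and "s \<in> S" and "s \<in> parabolic G I"
  shows "s \<in> I"
proof -
  obtain ws where ws: "reduced_expr G S ws s" "set ws \<subseteq> I"
    using assms(1,3) by (rule parabolic_reduced_expr)
  then have "length ws = 1" "wprod G ws = s"
    using cox_len_generator[OF assms(2)] by (auto simp: reduced_expr_def)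
  then show ?thesis
    using ws(2) assms(1) by (cases ws) (auto simp: subset_iff)
qed

lemma right_descent_in_parabolic:
  assumes I: "I \<subseteq> S" and w: "w \<in> parabolic G I" and s: "s \<in> S"
    and shorter: "len (w \<otimes> s) < len w"
  shows "s \<in> I"
proof -
  obtain ws where ws: "reduced_expr G S ws w" "set ws \<subseteq> I"
    using I w by (rule parabolic_reduced_expr)
  with s shorter obtain i where "w \<otimes> s = wprod G (take i ws @ drop (Suc i) ws)"
    by (auto elim: exchange_right)
  moreover have "take i ws @ drop (Suc i) ws \<in> lists I"
    using ws(2) set_delete_nth_subset[of i ws] by auto
  ultimately have "w \<otimes> s \<in> parabolic G I"
    by (simp add: wprod_in_parabolic)
  then have "inv w \<otimes> (w \<otimes> s) \<in> parabolic G I"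
    by (rule parabolic_mult[OF I parabolic_inv[OF I w]])
  moreover have "inv w \<otimes> (w \<otimes> s) = s"
    using parabolic_closed[OF I w] s by (simp add: m_assoc[symmetric])
  ultimately show ?thesis
    using generator_in_parabolicD[OF I s] by simp
qed

lemma reduced_expr_in_parabolic:
  "I \<subseteq> S \<Longrightarrow> reduced_expr G S ws w \<Longrightarrow> w \<in> parabolic G I \<Longrightarrow> set ws \<subseteq> I"
proof (induction ws arbitrary: w rule: rev_induct)
  case (snoc s xs)
  have xs: "xs \<in> lists S" and s: "s \<in> S" and w: "w = wprod G xs \<otimes> s"
    and len_w: "Suc (length xs) = len w"
    using reduced_exprD[OF snoc.prems(2)] by (auto simp: wprod_snoc)
  then have ws: "w \<otimes> s = wprod G xs"
    by simp
  then have shorter: "len (w \<otimes> s) < len w"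
    using cox_len_le_length[OF xs] len_w by simp
  then have "s \<in> I"
    using right_descent_in_parabolic[OF snoc.prems(1,3) s] by simp
  then have "w \<otimes> s \<in> parabolic G I"
    using parabolic_mult[OF snoc.prems(1,3) generator_in_parabolic] by simp
  moreover have "reduced_expr G S xs (w \<otimes> s)"
    using cox_len_mult_generator[of w s] shorter len_w xs ws s w by (auto simp: reduced_expr_def)
  ultimately show ?case
    using snoc.IH[OF snoc.prems(1)] \<open>s \<in> I\<close> by simp
qed simp

lemma supp_reduced_expr: "reduced_expr G S ws w \<Longrightarrow> supp G S w = set ws"
proof
  assume r: "reduced_expr G S ws w"
  show "set ws \<subseteq> supp G S w"
    unfolding supp_def using r by blast
  have "set ws \<subseteq> S" and "w \<in> parabolic G (set ws)"
    using reduced_exprD[OF r] wprod_in_parabolic[of ws "set ws"] by auto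
  then show "supp G S w \<subseteq> set ws"
    unfolding supp_def using reduced_expr_in_parabolic by blast
qed

lemma supp_subset: "w \<in> carrier G \<Longrightarrow> supp G S w \<subseteq> S"
  by (metis reduced_exprD reduced_expr_exists in_lists_conv_set subsetI supp_reduced_expr)

lemma parabolic_iff_supp:
  assumes "I \<subseteq> S" and "w \<in> carrier G"
  shows "w \<in> parabolic G I \<longleftrightarrow> supp G S w \<subseteq> I"
proof -
  obtain ws where r: "reduced_expr G S ws w"
    using reduced_expr_exists assms(2) by blast
  show ?thesis
    using reduced_expr_in_parabolic[OF assms(1) r] wprod_in_parabolic[of ws I]
      reduced_exprD[OF r] supp_reduced_expr[OF r] by auto
qed

lemma in_parabolic_supp: "w \<in> carrier G \<Longrightarrow> w \<in> parabolic G (supp G S w)"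
  using parabolic_iff_supp[OF supp_subset] by blast

lemma right_descent_in_supp:
  "w \<in> carrier G \<Longrightarrow> s \<in> S \<Longrightarrow> len (w \<otimes> s) < len w \<Longrightarrow> s \<in> supp G S w"
  using right_descent_in_parabolic[OF supp_subset in_parabolic_supp] .

lemma right_descent_exists:
  assumes "w \<in> carrier G" and "w \<noteq> \<one>"
  obtains s where "s \<in> S" and "len (w \<otimes> s) < len w"
proof -
  obtain ws where ws: "ws \<in> lists S" "wprod G ws = w" "length ws = len w"
    using reduced_expr_exists[OF assms(1)] by (auto simp: reduced_expr_def)
  then obtain xs s where xs: "ws = xs @ [s]"
    using assms(2) by (cases ws rule: rev_exhaust) auto
  then have "s \<in> S" and "w \<otimes> s = wprod G xs"
    using ws by (auto simp: wprod_snoc)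
  moreover have "len (wprod G xs) < len w"
    using cox_len_le_length[of xs] ws xs by simp
  ultimately show thesis
    using that by simp
qed

section \<open>Minimal coset representatives and parabolic components\<close>

lemma min_reps_closed: "u \<in> min_reps G S I \<Longrightarrow> u \<in> carrier G"
  by (simp add: min_reps_def)

definition coset_minimal :: "'a set \<Rightarrow> 'a \<Rightarrow> bool" where
  "coset_minimal I u \<longleftrightarrow> u \<in> carrier G \<and> (\<forall>y \<in> parabolic G I. len u \<le> len (u \<otimes> y))"

lemma coset_minimal_exists:
  assumes I: "I \<subseteq> S" and w: "w \<in> carrier G"
  obtains y where "y \<in> parabolic G I" and "coset_minimal I (w \<otimes> y)"
proof -
  define P where "P n \<longleftrightarrow> (\<exists>y \<in> parabolic G I. len (w \<otimes> y) = n)" for n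
  have "P (len (w \<otimes> \<one>))"
    unfolding P_def using parabolic_one[OF I] by blast
  then obtain y where y: "y \<in> parabolic G I" "len (w \<otimes> y) = Least P"
    using LeastI[of P] unfolding P_def by blast
  have "len (w \<otimes> y) \<le> len (w \<otimes> y \<otimes> z)" if z: "z \<in> parabolic G I" for z
  proof -
    have "P (len (w \<otimes> (y \<otimes> z)))"
      unfolding P_def using parabolic_mult[OF I y(1) z] by blast
    then show ?thesis
      using Least_le[of P] y(2) w parabolic_closed[OF I y(1)] parabolic_closed[OF I z]
      by (simp add: m_assoc)
  qed
  then have "coset_minimal I (w \<otimes> y)"
    unfolding coset_minimal_def using w parabolic_closed[OF I y(1)] by simp
  with y(1) show thesis
    by (rule that)
qed

lemma exchange_right_append:
  assumes r: "reduced_expr G S (us @ xs) w" and s: "s \<in> S" and shorter: "len (w \<otimes> s) < len w"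
  obtains (left) d where "d \<in> lists S" and "length d < length us" and "w \<otimes> s = wprod G (d @ xs)"
    | (right) d where "d \<in> lists S" and "length d < length xs" and "w \<otimes> s = wprod G (us @ d)"
proof -
  obtain i where i: "i < length (us @ xs)"
    and del: "w \<otimes> s = wprod G (take i (us @ xs) @ drop (Suc i) (us @ xs))"
    using r s shorter by (rule exchange_right)
  have us: "us \<in> lists S" and xs: "xs \<in> lists S"
    using reduced_exprD[OF r] by auto
  show thesis
  proof (cases "i < length us")
    case True
    have "take i us @ drop (Suc i) us \<in> lists S"
      using us set_delete_nth_subset[of i us] by auto
    moreover have "length (take i us @ drop (Suc i) us) < length us"
      using True by simp
    moreover have "w \<otimes> s = wprod G ((take i us @ drop (Suc i) us) @ xs)"
      using del True by simp
    ultimately show thesis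
      by (rule left)
  next
    case False
    define j where "j = i - length us"
    have "take j xs @ drop (Suc j) xs \<in> lists S"
      using xs set_delete_nth_subset[of j xs] by auto
    moreover have "length (take j xs @ drop (Suc j) xs) < length xs"
      using False i by (simp add: j_def)
    moreover have "w \<otimes> s = wprod G (us @ take j xs @ drop (Suc j) xs)"
      using del False by (simp add: j_def Suc_diff_le)
    ultimately show thesis
      by (rule right)
  qed
qed

text \<open>Deleting a letter of \<open>u\<close> would make \<open>u (x s x\<inverse>)\<close> shorter than \<open>u\<close>; deleting one
  of \<open>x\<close> would make \<open>x s\<close> shorter than \<open>x\<close>.\<close>
lemma coset_minimal_len_mult_generator:
  assumes I: "I \<subseteq> S" and u: "coset_minimal I u" and x: "x \<in> parabolic G I"
    and additive: "len (u \<otimes> x) = len u + len x" and s: "s \<in> I"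
    and longer: "len x < len (x \<otimes> s)"
  shows "len (u \<otimes> x \<otimes> s) = len (u \<otimes> x) + 1"
proof (rule ccontr)
  have sS: "s \<in> S" and uc: "u \<in> carrier G" and xc: "x \<in> carrier G"
    using I s u parabolic_closed[OF I x] by (auto simp: coset_minimal_def)
  assume "len (u \<otimes> x \<otimes> s) \<noteq> len (u \<otimes> x) + 1"
  then have shorter: "len (u \<otimes> x \<otimes> s) < len (u \<otimes> x)"
    using cox_len_mult_generator[of "u \<otimes> x" s] uc xc sS by auto
  obtain us where us: "us \<in> lists S" "wprod G us = u" "length us = len u"
    using reduced_expr_exists[OF uc] by (auto simp: reduced_expr_def)
  obtain xs where xs: "xs \<in> lists S" "wprod G xs = x" "length xs = len x"
    using reduced_expr_exists[OF xc] by (auto simp: reduced_expr_def)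
  have "reduced_expr G S (us @ xs) (u \<otimes> x)"
    using us xs additive by (auto simp: reduced_expr_def wprod_append)
  then show False
    using sS shorter
  proof (cases rule: exchange_right_append)
    case (left d)
    then have eq: "u \<otimes> x \<otimes> s = wprod G d \<otimes> x"
      using xs by (simp add: wprod_append)
    have "u \<otimes> (x \<otimes> s \<otimes> inv x) = u \<otimes> x \<otimes> s \<otimes> inv x"
      using uc xc sS by (simp add: m_assoc)
    also have "\<dots> = wprod G d"
      unfolding eq using left(1) xc by (simp add: m_assoc)
    finally have "u \<otimes> (x \<otimes> s \<otimes> inv x) = wprod G d" .
    moreover have "x \<otimes> s \<otimes> inv x \<in> parabolic G I"
      using parabolic_mult[OF I parabolic_mult[OF I x generator_in_parabolic[OF s]] parabolic_inv[OF I x]] .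
    ultimately have "len u \<le> len (wprod G d)"
      using u unfolding coset_minimal_def by metis
    then show False
      using cox_len_le_length[OF left(1)] left(2) us(3) by linarith
  next
    case (right d)
    then have "u \<otimes> x \<otimes> s = u \<otimes> wprod G d"
      using us by (simp add: wprod_append)
    then have "x \<otimes> s = wprod G d"
      using uc xc sS right(1) by (simp add: m_assoc)
    then show False
      using cox_len_le_length[OF right(1)] right(2) xs(3) longer by simp
  qed
qed

lemma coset_minimal_len_mult:
  assumes I: "I \<subseteq> S" and u: "coset_minimal I u" and x: "x \<in> parabolic G I"
  shows "len (u \<otimes> x) = len u + len x"
proof -
  obtain xs where "reduced_expr G S xs x" and "set xs \<subseteq> I"
    using I x by (rule parabolic_reduced_expr)
  then show ?thesis
  proof (induction xs arbitrary: x rule: rev_induct)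
    case Nil
    then have "x = \<one>"
      by (simp add: reduced_expr_def)
    then show ?case
      using u by (simp add: coset_minimal_def)
  next
    case (snoc s xs)
    define y where "y = wprod G xs"
    have xs: "xs \<in> lists S" and s: "s \<in> I" "s \<in> S" and x_eq: "x = y \<otimes> s"
      and len_x: "len x = Suc (length xs)"
      using reduced_exprD[OF snoc.prems(1)] snoc.prems(2) by (auto simp: y_def wprod_snoc)
    have y: "y \<in> parabolic G I" "y \<in> carrier G"
      using xs snoc.prems(2) by (auto simp: y_def intro!: wprod_in_parabolic)
    have len_y: "len y = length xs"
      using cox_len_le_length[OF xs] cox_len_mult_generator_le[OF y(2) s(2)] len_x
      unfolding x_eq y_def by linarith
    then have "reduced_expr G S xs y"
      using xs by (simp add: reduced_expr_def y_def)
    then have "len (u \<otimes> y) = len u + len y"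
      using snoc.IH snoc.prems(2) by simp
    moreover from this have "len (u \<otimes> y \<otimes> s) = len (u \<otimes> y) + 1"
      using len_x len_y x_eq
      by (intro coset_minimal_len_mult_generator[OF I u y(1) _ s(1)]) auto
    ultimately show ?case
      using u y(2) s(2) len_x len_y x_eq by (simp add: coset_minimal_def m_assoc)
  qed
qed

lemma min_reps_coset_minimal:
  assumes I: "I \<subseteq> S" and u: "u \<in> min_reps G S I"
  shows "coset_minimal I u"
proof -
  have uc: "u \<in> carrier G"
    using u by (rule min_reps_closed)
  obtain y where y: "y \<in> parabolic G I" and m: "coset_minimal I (u \<otimes> y)"
    using I uc by (rule coset_minimal_exists)
  have yc: "y \<in> carrier G" and y': "inv y \<in> parabolic G I"
    using parabolic_closed[OF I y] parabolic_inv[OF I y] .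
  have u_eq: "u = u \<otimes> y \<otimes> inv y"
    using uc yc by (simp add: m_assoc)
  have "inv y = \<one>"
  proof (rule ccontr)
    assume "inv y \<noteq> \<one>"
    with inv_closed[OF yc] obtain s where s: "s \<in> S" and shorter: "len (inv y \<otimes> s) < len (inv y)"
      by (rule right_descent_exists)
    then have "s \<in> I"
      using right_descent_in_parabolic[OF I y'] by simp
    have "len (u \<otimes> s) = len (u \<otimes> y \<otimes> (inv y \<otimes> s))"
      using u_eq uc yc s by (metis generator_closed inv_closed m_assoc m_closed)
    also have "\<dots> = len (u \<otimes> y) + len (inv y \<otimes> s)"
      using parabolic_mult[OF I y' generator_in_parabolic[OF \<open>s \<in> I\<close>]]
      by (rule coset_minimal_len_mult[OF I m])
    also have "\<dots> < len (u \<otimes> y) + len (inv y)"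
      using shorter by simp
    also have "\<dots> = len u"
      using coset_minimal_len_mult[OF I m y'] u_eq by simp
    finally show False
      using u \<open>s \<in> I\<close> by (auto simp: min_reps_def)
  qed
  then have "y = \<one>"
    using yc by (metis inv_inv inv_one one_closed)
  then show ?thesis
    using m uc by simp
qed

lemma len_min_reps_mult:
  "I \<subseteq> S \<Longrightarrow> u \<in> min_reps G S I \<Longrightarrow> x \<in> parabolic G I \<Longrightarrow> len (u \<otimes> x) = len u + len x"
  using coset_minimal_len_mult min_reps_coset_minimal by blast

lemma min_reps_factorization_exists:
  assumes I: "I \<subseteq> S" and w: "w \<in> carrier G"
  obtains u x where "u \<in> min_reps G S I" and "x \<in> parabolic G I" and "w = u \<otimes> x"
proof -
  obtain y where y: "y \<in> parabolic G I" and m: "coset_minimal I (w \<otimes> y)"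
    using I w by (rule coset_minimal_exists)
  have yc: "y \<in> carrier G"
    using parabolic_closed[OF I y] .
  have "len (w \<otimes> y) < len (w \<otimes> y \<otimes> s)" if s: "s \<in> I" for s
  proof -
    have "len (w \<otimes> y) \<le> len (w \<otimes> y \<otimes> s)"
      using m generator_in_parabolic[OF s] unfolding coset_minimal_def by blast
    moreover have "len (w \<otimes> y \<otimes> s) \<noteq> len (w \<otimes> y)"
      using cox_len_mult_generator_neq[of "w \<otimes> y" s] w yc s I by auto
    ultimately show ?thesis
      by simp
  qed
  then have "w \<otimes> y \<in> min_reps G S I"
    using w yc by (simp add: min_reps_def)
  moreover have "w = w \<otimes> y \<otimes> inv y"
    using w yc by (simp add: m_assoc)
  ultimately show thesis
    using that parabolic_inv[OF I y] by blast
qed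

lemma min_reps_factorization_unique:
  assumes I: "I \<subseteq> S" and u: "u \<in> min_reps G S I" "u' \<in> min_reps G S I"
    and x: "x \<in> parabolic G I" "x' \<in> parabolic G I" and eq: "u \<otimes> x = u' \<otimes> x'"
  shows "u = u'" and "x = x'"
proof -
  have c: "u \<in> carrier G" "u' \<in> carrier G" "x \<in> carrier G" "x' \<in> carrier G"
    using u min_reps_closed parabolic_closed[OF I] x by auto
  define y where "y = x \<otimes> inv x'"
  have y: "y \<in> parabolic G I" "y \<in> carrier G"
    using parabolic_mult[OF I x(1) parabolic_inv[OF I x(2)]] c by (auto simp: y_def)
  have "u \<otimes> y = u \<otimes> x \<otimes> inv x'"
    using c by (simp add: y_def m_assoc)
  also have "\<dots> = u'"
    using c by (simp add: eq m_assoc)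
  finally have u': "u' = u \<otimes> y" ..
  then have "u = u' \<otimes> inv y"
    using c y by (simp add: m_assoc)
  then have "len u = len u' + len (inv y)" and "len u' = len u + len y"
    using u' len_min_reps_mult[OF I u(2) parabolic_inv[OF I y(1)]] len_min_reps_mult[OF I u(1) y(1)]
    by simp_all
  then have "y = \<one>"
    using cox_len_eq_0[OF y(2)] by simp
  then show "u = u'"
    using u' c by simp
  from \<open>y = \<one>\<close> show "x = x'"
    using c by (metis inv_closed inv_equality inv_inv y_def)
qed

lemma par_quot_mult:
  "I \<subseteq> S \<Longrightarrow> u \<in> min_reps G S I \<Longrightarrow> x \<in> parabolic G I \<Longrightarrow> par_quot G S I (u \<otimes> x) = u"
  unfolding par_quot_def by (rule the_equality) (auto dest: min_reps_factorization_unique)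

lemma par_comp_mult:
  "I \<subseteq> S \<Longrightarrow> u \<in> min_reps G S I \<Longrightarrow> x \<in> parabolic G I \<Longrightarrow> par_comp G S I (u \<otimes> x) = x"
  unfolding par_comp_def by (rule the_equality) (auto dest: min_reps_factorization_unique)

lemma parabolic_factorization:
  assumes "I \<subseteq> S" and "w \<in> carrier G"
  obtains q c where "q \<in> min_reps G S I" and "c \<in> parabolic G I" and "w = q \<otimes> c"
    and "par_quot G S I w = q" and "par_comp G S I w = c"
  using min_reps_factorization_exists[OF assms] par_quot_mult[OF assms(1)] par_comp_mult[OF assms(1)]
  by metis

lemma min_reps_iff:
  "I \<subseteq> S \<Longrightarrow> u \<in> min_reps G S I \<longleftrightarrow> u \<in> carrier G \<and> (\<forall>s \<in> I. \<not> len (u \<otimes> s) < len u)"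
  using cox_len_mult_generator_neq by (fastforce simp: min_reps_def)

lemma min_reps_mult_par_quot:
  assumes J: "J \<subseteq> S" and IJ: "I \<subseteq> J" and a: "a \<in> min_reps G S J" and b: "b \<in> parabolic G J"
  shows "a \<otimes> par_quot G S I b \<in> min_reps G S I"
proof -
  have I: "I \<subseteq> S"
    using J IJ by auto
  obtain q c where q: "q \<in> min_reps G S I" and c: "c \<in> parabolic G I" and b_eq: "b = q \<otimes> c"
    and quot: "par_quot G S I b = q"
    using I parabolic_closed[OF J b] by (rule parabolic_factorization)
  have qc: "q \<in> carrier G" and cc: "c \<in> carrier G"
    using min_reps_closed[OF q] parabolic_closed[OF I c] .
  have "q = b \<otimes> inv c"
    using qc cc by (simp add: b_eq m_assoc)
  then have qJ: "q \<in> parabolic G J"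
    using parabolic_mult[OF J b parabolic_inv[OF J]] c parabolic_mono[OF IJ] by auto
  have "len (a \<otimes> q) < len (a \<otimes> q \<otimes> r)" if r: "r \<in> I" for r
  proof -
    have "r \<in> J" "r \<in> S"
      using r IJ I by auto
    then have "len (a \<otimes> q \<otimes> r) = len a + len (q \<otimes> r)"
      using len_min_reps_mult[OF J a parabolic_mult[OF J qJ generator_in_parabolic]]
        min_reps_closed[OF a] qc by (simp add: m_assoc)
    moreover have "len q < len (q \<otimes> r)"
      using q r by (simp add: min_reps_def)
    ultimately show ?thesis
      using len_min_reps_mult[OF J a qJ] by simp
  qed
  then show ?thesis
    using min_reps_closed[OF a] qc by (simp add: min_reps_def quot)
qed

lemma parabolic_components_min_reps_mult:
  assumes "J \<subseteq> S" and "I \<subseteq> J" and "a \<in> min_reps G S J" and "b \<in> parabolic G J"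
  shows "par_quot G S I (a \<otimes> b) = a \<otimes> par_quot G S I b"
    and "par_comp G S I (a \<otimes> b) = par_comp G S I b"
proof -
  have I: "I \<subseteq> S"
    using assms by auto
  obtain q c where q: "q \<in> min_reps G S I" and c: "c \<in> parabolic G I" and b_eq: "b = q \<otimes> c"
    and quot: "par_quot G S I b = q" and comp: "par_comp G S I b = c"
    using I parabolic_closed[OF assms(1,4)] by (rule parabolic_factorization)
  have "a \<otimes> q \<in> min_reps G S I"
    using min_reps_mult_par_quot[OF assms] by (simp add: quot)
  moreover have "a \<otimes> b = a \<otimes> q \<otimes> c"
    using b_eq min_reps_closed[OF assms(3)] min_reps_closed[OF q] parabolic_closed[OF I c]
    by (simp add: m_assoc)
  ultimately show "par_quot G S I (a \<otimes> b) = a \<otimes> par_quot G S I b"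
    and "par_comp G S I (a \<otimes> b) = par_comp G S I b"
    using par_quot_mult[OF I _ c] par_comp_mult[OF I _ c] quot comp by simp_all
qed

lemma supp_min_reps_mult:
  assumes I: "I \<subseteq> S" and u: "u \<in> min_reps G S I" and x: "x \<in> parabolic G I"
  shows "supp G S (u \<otimes> x) = supp G S u \<union> supp G S x"
proof -
  obtain us where us: "reduced_expr G S us u"
    using reduced_expr_exists min_reps_closed[OF u] by blast
  obtain xs where xs: "reduced_expr G S xs x"
    using reduced_expr_exists parabolic_closed[OF I x] by blast
  have "reduced_expr G S (us @ xs) (u \<otimes> x)"
    using reduced_exprD[OF us] reduced_exprD[OF xs] len_min_reps_mult[OF I u x]
    by (auto simp: reduced_expr_def wprod_append)
  then show ?thesis
    using supp_reduced_expr[OF us] supp_reduced_expr[OF xs] supp_reduced_expr by simp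
qed

lemma min_reps_mult_descent:
  assumes J: "J \<subseteq> S" and a: "a \<in> min_reps G S J" and b: "b \<in> parabolic G J"
    and s: "s \<in> J" and shorter: "len (b \<otimes> s) < len b"
  shows "s \<in> descents G S (a \<otimes> b)"
proof -
  have "len (a \<otimes> b \<otimes> s) = len a + len (b \<otimes> s)"
    using len_min_reps_mult[OF J a parabolic_mult[OF J b generator_in_parabolic[OF s]]]
      min_reps_closed[OF a] parabolic_closed[OF J b] s J by (auto simp: m_assoc)
  then show ?thesis
    using shorter len_min_reps_mult[OF J a b] s J by (auto simp: descents_def)
qed

lemma par_comp_right_descent_iff:
  assumes K: "K \<subseteq> S" and y: "y \<in> carrier G" and r: "r \<in> K"
  shows "len (par_comp G S K y \<otimes> r) < len (par_comp G S K y) \<longleftrightarrow> len (y \<otimes> r) < len y"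
proof -
  obtain q z where q: "q \<in> min_reps G S K" and z: "z \<in> parabolic G K" and y_eq: "y = q \<otimes> z"
    and comp: "par_comp G S K y = z"
    using K y by (rule parabolic_factorization)
  have "len (y \<otimes> r) = len q + len (z \<otimes> r)"
    using len_min_reps_mult[OF K q parabolic_mult[OF K z generator_in_parabolic[OF r]]]
      min_reps_closed[OF q] parabolic_closed[OF K z] r K by (auto simp: y_eq m_assoc)
  moreover have "len y = len q + len z"
    using len_min_reps_mult[OF K q z] by (simp add: y_eq)
  ultimately show ?thesis
    by (simp add: comp)
qed

lemma par_comp_min_reps:
  assumes IK: "I \<subseteq> K" and K: "K \<subseteq> S" and y: "y \<in> min_reps G S I"
  shows "par_comp G S K y \<in> min_reps G S I"
proof -
  have yc: "y \<in> carrier G"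
    using min_reps_closed[OF y] .
  obtain z where z: "z \<in> parabolic G K" and comp: "par_comp G S K y = z"
    using K yc by (rule parabolic_factorization)
  then show ?thesis
    using IK K y par_comp_right_descent_iff[OF K yc] parabolic_closed[OF K z]
    by (auto simp: min_reps_iff)
qed

section \<open>The order and its covers\<close>

lemma cox_le_iff:
  assumes "u \<in> carrier G"
  shows "cox_le G S u w \<longleftrightarrow> (\<exists>y \<in> min_reps G S (supp G S u). w = y \<otimes> u)"
proof -
  have I: "supp G S u \<subseteq> S" and uI: "u \<in> parabolic G (supp G S u)"
    using supp_subset in_parabolic_supp assms by auto
  show ?thesis
  proof
    assume "cox_le G S u w"
    then have "w \<in> carrier G" and "par_comp G S (supp G S u) w = u"
      by (auto simp: cox_le_def)
    then show "\<exists>y \<in> min_reps G S (supp G S u). w = y \<otimes> u"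
      using parabolic_factorization[OF I] by metis
  next
    assume "\<exists>y \<in> min_reps G S (supp G S u). w = y \<otimes> u"
    then show "cox_le G S u w"
      using par_comp_mult[OF I _ uI] assms min_reps_closed by (auto simp: cox_le_def)
  qed
qed

lemma supp_min_reps_mult_supp:
  "u \<in> carrier G \<Longrightarrow> y \<in> min_reps G S (supp G S u) \<Longrightarrow> supp G S (y \<otimes> u) = supp G S y \<union> supp G S u"
  by (rule supp_min_reps_mult[OF supp_subset _ in_parabolic_supp])

lemma par_comp_descent_between:
  assumes u: "u \<in> carrier G" and y: "y \<in> min_reps G S (supp G S u)"
    and s: "s \<in> S" and shorter: "len (y \<otimes> s) < len y"
  defines "K \<equiv> insert s (supp G S u)"
  shows "cox_less G S u (par_comp G S K y \<otimes> u)"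
    and "cox_le G S (par_comp G S K y \<otimes> u) (y \<otimes> u)"
    and "supp G S (par_comp G S K y \<otimes> u) = K"
proof -
  have I: "supp G S u \<subseteq> S" and K: "K \<subseteq> S" and IK: "supp G S u \<subseteq> K" and sK: "s \<in> K"
    using supp_subset[OF u] s by (auto simp: K_def)
  obtain q z where q: "q \<in> min_reps G S K" and z: "z \<in> parabolic G K" and y_eq: "y = q \<otimes> z"
    and comp: "par_comp G S K y = z"
    using K min_reps_closed[OF y] by (rule parabolic_factorization)
  have zc: "z \<in> carrier G"
    using parabolic_closed[OF K z] .
  have zI: "z \<in> min_reps G S (supp G S u)"
    using par_comp_min_reps[OF IK K y] comp by simp
  have "len (z \<otimes> s) < len z"
    using par_comp_right_descent_iff[OF K min_reps_closed[OF y] sK] shorter comp by simp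
  then have "s \<in> supp G S z" and "z \<noteq> \<one>"
    using right_descent_in_supp[OF zc s] by auto
  moreover have "supp G S z \<subseteq> K"
    using parabolic_iff_supp[OF K zc] z by simp
  ultimately show supp_zu: "supp G S (par_comp G S K y \<otimes> u) = K"
    using supp_min_reps_mult_supp[OF u zI] comp by (auto simp: K_def)
  have "z \<otimes> u \<noteq> u"
    using \<open>z \<noteq> \<one>\<close> zc u by (metis l_one r_cancel one_closed)
  then show "cox_less G S u (par_comp G S K y \<otimes> u)"
    using cox_le_iff[OF u] zI comp by (auto simp: cox_less_def)
  have "y \<otimes> u = q \<otimes> (z \<otimes> u)"
    using y_eq min_reps_closed[OF q] zc u by (simp add: m_assoc)
  then show "cox_le G S (par_comp G S K y \<otimes> u) (y \<otimes> u)"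
    using cox_le_iff[of "z \<otimes> u"] supp_zu q zc u comp by auto
qed

lemma covers_inE:
  assumes u: "u \<in> carrier G" and cover: "covers_in G S u v u'"
  defines "I \<equiv> supp G S u"
  obtains s where "s \<in> descents G S (par_quot G S I v)"
    and "u' = par_comp G S (I \<union> {s}) (par_quot G S I v) \<otimes> u"
    and "supp G S u' = I \<union> {s}"
proof -
  have less: "cox_less G S u u'" and le: "cox_le G S u' v"
    and no_between: "\<not> (\<exists>w \<in> carrier G. cox_less G S u w \<and> cox_less G S w u')"
    using cover by (auto simp: covers_in_def)
  obtain y where y: "y \<in> min_reps G S I" and u': "u' = y \<otimes> u"
    using less cox_le_iff[OF u] by (auto simp: cox_less_def I_def)
  have yc: "y \<in> carrier G" and u'c: "u' \<in> carrier G"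
    using min_reps_closed[OF y] u by (auto simp: u')
  define J where "J = supp G S u'"
  obtain x where x: "x \<in> min_reps G S J" and v: "v = x \<otimes> u'"
    using le cox_le_iff[OF u'c] by (auto simp: J_def)
  have I: "I \<subseteq> S" and J: "J \<subseteq> S" and J_eq: "J = supp G S y \<union> I"
    using supp_subset u u'c supp_min_reps_mult_supp[OF u] y by (auto simp: I_def J_def u')
  have yJ: "y \<in> parabolic G J" and u'J: "u' \<in> parabolic G J"
    using parabolic_iff_supp[OF J] yc u'c J_eq by (auto simp: J_def)
  have quot_v: "par_quot G S I v = x \<otimes> y"
    using parabolic_components_min_reps_mult(1)[OF J _ x u'J] par_quot_mult[OF I y] in_parabolic_supp[OF u]
      J_eq by (simp add: v u' I_def)
  have "y \<noteq> \<one>"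
    using less u by (auto simp: cox_less_def u')
  then obtain s where s: "s \<in> S" and shorter: "len (y \<otimes> s) < len y"
    using yc by (auto elim: right_descent_exists)
  have sJ: "s \<in> J"
    using right_descent_in_supp[OF yc s shorter] J_eq by simp
  define w where "w = par_comp G S (insert s I) y \<otimes> u"
  note between = par_comp_descent_between[OF u y[unfolded I_def] s shorter, folded I_def, folded w_def]
  have "w \<in> carrier G"
    using between(2) by (simp add: cox_le_def)
  then have "w = u'"
    using between(1,2) no_between by (auto simp: cox_less_def u')
  moreover have "par_comp G S (insert s I) (par_quot G S I v) = par_comp G S (insert s I) y"
    using parabolic_components_min_reps_mult(2)[OF J _ x yJ] sJ J_eq quot_v by simp
  ultimately show thesis
    using that min_reps_mult_descent[OF J x yJ sJ shorter] between(3) quot_v by (simp add: w_def)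
qed

end

theorem mainTheorem10:
  fixes G :: "('a, 'b) monoid_scheme" and S :: "'a set" and u v u' :: 'a
  assumes "coxeter_system G S"
    and "u \<in> carrier G" and "v \<in> carrier G"
    and "cox_less G S u v"
    and "covers_in G S u v u'"
  shows "\<exists>s \<in> descents G S (par_quot G S (supp G S u) v).
           u' = par_comp G S (supp G S u \<union> {s}) (par_quot G S (supp G S u) v) \<otimes>\<^bsub>G\<^esub> u
         \<and> cosupp G S u' = cosupp G S u - {s}"
proof -
  interpret coxeter_group G S
    using assms(1) by unfold_locales
  obtain s where "s \<in> descents G S (par_quot G S (supp G S u) v)"
    and "u' = par_comp G S (supp G S u \<union> {s}) (par_quot G S (supp G S u) v) \<otimes>\<^bsub>G\<^esub> u"
    and "supp G S u' = supp G S u \<union> {s}"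
    using covers_inE[OF assms(2,5)] by blast
  then show ?thesis
    by (auto simp: cosupp_def)
qed

end
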